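(* Let $N\ge3$ and let $\bm A=A_1\cdots A_N$ be a random $N$-bit string with distribution $p_{\bm A}$ on $\{0,1\}^N$. For $k\in\{1,\dots,N-1\}$ let $\bm A_{\bar k}$ denote the $(N-2)$-bit substring excluding bits $k$ and $N$. Suppose that $p_{\bm A_{\bar k}}(\bm a_{\bar k})>0$ and $p_{A_kA_N|\bm A_{\bar k}}(a_ka_N|\bm a_{\bar k})>0$ for all $k,a_k,a_N,\bm a_{\bar k}$. Then $p_{\bm A}$ is uniquely determined by the family of conditional distributions $\{p_{A_kA_N|\bm A_{\bar k}}\}_{k\in\{1,\dots,N-1\}}$: any two such distributions on $\{0,1\}^N$ satisfying the positivity conditions and having the same conditionals $p_{A_kA_N|\bm A_{\bar k}}$ for all $k\in\{1,\dots,N-1\}$ are equal. *)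

theory Defs
  imports Complex_Main
begin

text \<open>N-bit strings a = a_1 ... a_N, encoded as functions nat => bool that are False
  outside the index range 1..N.\<close>
definition bitstrings :: "nat \<Rightarrow> (nat \<Rightarrow> bool) set" where
  "bitstrings N = {a. \<forall>i. i \<notin> {1..N} \<longrightarrow> a i = False}"

definition is_distr :: "nat \<Rightarrow> ((nat \<Rightarrow> bool) \<Rightarrow> real) \<Rightarrow> bool" where
  "is_distr N p \<longleftrightarrow> (\<forall>a. 0 \<le> p a) \<and> (\<forall>a. a \<notin> bitstrings N \<longrightarrow> p a = 0)
     \<and> sum p (bitstrings N) = 1"

definition agree_excl :: "nat \<Rightarrow> nat \<Rightarrow> (nat \<Rightarrow> bool) \<Rightarrow> (nat \<Rightarrow> bool) \<Rightarrow> bool" where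
  "agree_excl N k a b \<longleftrightarrow> (\<forall>i \<in> {1..N} - {k, N}. a i = b i)"

text \<open>Marginal p_{A_kbar}(a_kbar), evaluated at the substring of a excluding bits k and N.\<close>
definition marg_excl :: "nat \<Rightarrow> ((nat \<Rightarrow> bool) \<Rightarrow> real) \<Rightarrow> nat \<Rightarrow> (nat \<Rightarrow> bool) \<Rightarrow> real" where
  "marg_excl N p k a = sum p {b \<in> bitstrings N. agree_excl N k a b}"

text \<open>Conditional p_{A_k A_N | A_kbar}(a_k a_N | a_kbar), where a is the full string.\<close>
definition cond_excl :: "nat \<Rightarrow> ((nat \<Rightarrow> bool) \<Rightarrow> real) \<Rightarrow> nat \<Rightarrow> (nat \<Rightarrow> bool) \<Rightarrow> real" where
  "cond_excl N p k a = p a / marg_excl N p k a"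

definition positive_conds :: "nat \<Rightarrow> ((nat \<Rightarrow> bool) \<Rightarrow> real) \<Rightarrow> bool" where
  "positive_conds N p \<longleftrightarrow> (\<forall>k \<in> {1..N-1}. \<forall>a \<in> bitstrings N.
      0 < marg_excl N p k a \<and> 0 < cond_excl N p k a)"

end

theory Submission
  imports Defs
begin

text \<open>Flipping a single bit \<open>x\<close> keeps the substring excluding bits \<open>k\<close> and \<open>N\<close> fixed for a
  suitable \<open>k\<close> (namely \<open>k = x\<close>, or \<open>k = 1\<close> when \<open>x = N\<close>), so the two marginals are the same
  at both strings. Equal conditionals then force \<open>p/q\<close> to take the same value at both strings;
  since the Hamming graph of the cube is connected, \<open>p/q\<close> is constant, and normalisation makes
  the constant 1.\<close>

lemma marg_excl_cong:
  assumes "agree_excl N k a b"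
  shows "marg_excl N p k a = marg_excl N p k b"
proof -
  have "{c \<in> bitstrings N. agree_excl N k a c} = {c \<in> bitstrings N. agree_excl N k b c}"
    using assms unfolding agree_excl_def by auto
  then show ?thesis
    unfolding marg_excl_def by simp
qed

lemma positive_conds_imp_pos:
  assumes "N \<ge> 2" "positive_conds N p" "a \<in> bitstrings N"
  shows "p a > 0"
proof -
  have "0 < marg_excl N p 1 a" "0 < cond_excl N p 1 a"
    using assms unfolding positive_conds_def by auto
  then show ?thesis
    unfolding cond_excl_def by (simp add: zero_less_divide_iff)
qed

lemma exists_excl_index:
  fixes N x :: nat
  assumes "N \<ge> 2" "x \<in> {1..N}"
  obtains k where "k \<in> {1..N-1}" "x \<in> {k, N}"
proof (cases "x = N")
  case True
  then show ?thesis using that[of 1] assms by auto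
next
  case False
  then show ?thesis using that[of x] assms by auto
qed

lemma ratio_eq_if_differ_in_one_bit:
  assumes "N \<ge> 2" "positive_conds N p" "positive_conds N q"
    and cond_eq: "\<forall>k \<in> {1..N-1}. \<forall>a \<in> bitstrings N. cond_excl N p k a = cond_excl N q k a"
    and ab: "a \<in> bitstrings N" "b \<in> bitstrings N"
    and "x \<in> {1..N}" and differ: "\<forall>i. i \<noteq> x \<longrightarrow> a i = b i"
  shows "p a / q a = p b / q b"
proof -
  obtain k where k: "k \<in> {1..N-1}" "x \<in> {k, N}"
    using exists_excl_index assms(1,7) by blast
  have "agree_excl N k a b"
    using differ k unfolding agree_excl_def by auto
  then have mp: "marg_excl N p k b = marg_excl N p k a"
    and mq: "marg_excl N q k b = marg_excl N q k a"
    using marg_excl_cong by metis+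
  have "marg_excl N p k a > 0" "marg_excl N q k a > 0"
    using assms(2,3) k ab unfolding positive_conds_def by auto
  have "q a > 0" "q b > 0"
    using positive_conds_imp_pos[OF assms(1,3)] ab by auto
  have "p a / marg_excl N p k a = q a / marg_excl N q k a"
    "p b / marg_excl N p k b = q b / marg_excl N q k b"
    using cond_eq k ab unfolding cond_excl_def by auto
  then have "p a / q a = marg_excl N p k a / marg_excl N q k a"
    "p b / q b = marg_excl N p k a / marg_excl N q k a"
    using mp mq \<open>marg_excl N p k a > 0\<close> \<open>marg_excl N q k a > 0\<close> \<open>q a > 0\<close> \<open>q b > 0\<close> by (simp_all add: field_simps)
  then show ?thesis by simp
qed

lemma bitstrings_const_if_single_bit_invariant:
  assumes invariant: "\<And>a b x. a \<in> bitstrings N \<Longrightarrow> b \<in> bitstrings N \<Longrightarrow> x \<in> {1..N} \<Longrightarrow>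
      (\<forall>i. i \<noteq> x \<longrightarrow> a i = b i) \<Longrightarrow> f a = f b"
    and "a \<in> bitstrings N"
  shows "f a = f (\<lambda>_. False)"
proof -
  have "f (\<lambda>i. i \<in> S) = f (\<lambda>_. False)" if "finite S" "S \<subseteq> {1..N}" for S
    using that
  proof (induction S rule: finite_induct)
    case empty
    then show ?case by simp
  next
    case (insert x S)
    have "f (\<lambda>i. i \<in> insert x S) = f (\<lambda>i. i \<in> S)"
      by (rule invariant[of _ _ x]) (use insert in \<open>auto simp: bitstrings_def\<close>)
    then show ?case using insert by simp
  qed
  moreover have "{i. a i} \<subseteq> {1..N}"
    using assms(2) unfolding bitstrings_def by auto
  ultimately have "f (\<lambda>i. i \<in> {i. a i}) = f (\<lambda>_. False)"
    using finite_subset[of "{i. a i}" "{1..N}"] by blast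
  then show ?thesis by simp
qed

lemma is_distr_eq_if_proportional:
  assumes "is_distr N p" "is_distr N q" and proportional: "\<forall>a \<in> bitstrings N. p a = c * q a"
  shows "p = q"
proof -
  have "sum p (bitstrings N) = c * sum q (bitstrings N)"
    using proportional by (simp add: sum_distrib_left)
  then have "c = 1"
    using assms(1,2) unfolding is_distr_def by simp
  show ?thesis
  proof
    fix a
    show "p a = q a"
      using proportional \<open>c = 1\<close> assms(1,2) unfolding is_distr_def by (cases "a \<in> bitstrings N") auto
  qed
qed

theorem lemma11:
  fixes N :: nat and p q :: "(nat \<Rightarrow> bool) \<Rightarrow> real"
  assumes "N \<ge> 3"
    and "is_distr N p" and "is_distr N q"
    and "positive_conds N p" and "positive_conds N q"
    and "\<forall>k \<in> {1..N-1}. \<forall>a \<in> bitstrings N. cond_excl N p k a = cond_excl N q k a"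
  shows "p = q"
proof (rule is_distr_eq_if_proportional[OF assms(2,3)])
  have N2: "N \<ge> 2" using assms(1) by simp
  let ?c = "p (\<lambda>_. False) / q (\<lambda>_. False)"
  show "\<forall>a \<in> bitstrings N. p a = ?c * q a"
  proof
    fix a assume a: "a \<in> bitstrings N"
    have "p a / q a = ?c"
      using bitstrings_const_if_single_bit_invariant[of N "\<lambda>a. p a / q a", OF _ a]
        ratio_eq_if_differ_in_one_bit[OF N2 assms(4,5,6)] by blast
    then show "p a = ?c * q a"
      using positive_conds_imp_pos[OF N2 assms(5) a] by (simp add: field_simps)
  qed
qed

end
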